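(* For all integers $n\ge1$ and $r\ge0$, and all $X>0$, $$P^{n}\big[X^{n}\check q_r(\alpha)\big](X)=\frac{(-1)^{n}}{\binom{r+n}{n}}\,(P-1)\Big(P-\tfrac12\Big)\cdots\Big(P-\tfrac1n\Big)\big[\check q_{r+n}(\alpha)\big](X).$$
   Context: For $X>0$, $\alpha=X-\lfloor X\rfloor$. $P[f](X)=\frac1X\int_0^X f(x)\,dx$, $1$ denotes the identity operator, and polynomials in $P$ act by composition. The polynomials $q_n$ are defined by $q_1(\alpha)=\alpha-\tfrac12$ and $q_{n+1}'=q_n$, $\int_0^1 q_{n+1}=0$; $\check q_j(\alpha):=j!\,q_{j+1}(\alpha)$, regarded as period-1 functions of $X$. *)

theory Defs
  imports "HOL-Analysis.Analysis"
begin

definition Pop :: "(real \<Rightarrow> real) \<Rightarrow> real \<Rightarrow> real" where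
  "Pop f X = integral {0..X} f / X"

text \<open>The polynomials q_n on [0,1): q_1(a) = a - 1/2, q_{n+1}' = q_n and
  int_0^1 q_{n+1} = 0, realised as q_{n+1}(a) = int_0^a q_n - int_0^1 int_0^b q_n db.
  (Index 0 is a dummy value, never used.)\<close>
fun qpoly :: "nat \<Rightarrow> real \<Rightarrow> real" where
  "qpoly 0 = (\<lambda>_. 1)"
| "qpoly (Suc 0) = (\<lambda>a. a - 1/2)"
| "qpoly (Suc (Suc n)) = (\<lambda>a. integral {0..a} (qpoly (Suc n))
        - integral {0..1} (\<lambda>b. integral {0..b} (qpoly (Suc n))))"

definition qcheck :: "nat \<Rightarrow> real \<Rightarrow> real" where
  "qcheck j a = fact j * qpoly (Suc j) a"

text \<open>Pfactors n = (P - 1)(P - 1/2)...(P - 1/n) acting by composition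
  (the factors commute; the factor P - 1/(k+1) is applied after the first k).\<close>
fun Pfactors :: "nat \<Rightarrow> (real \<Rightarrow> real) \<Rightarrow> real \<Rightarrow> real" where
  "Pfactors 0 f = f"
| "Pfactors (Suc k) f = (\<lambda>X. Pop (Pfactors k f) X - Pfactors k f X / real (Suc k))"

end

theory Submission
  imports Defs
begin

text \<open>Integration by parts: qcheck (r+1) has derivative (r+1) * qcheck r on [0, 1] and takes equal
  values at 0 and 1, so qcheck (r+1) (frac x) is continuous and
    P[x^(n+1) qcheck r (frac x)] = (X^n qcheck (r+1) (frac X) - (n+1) P[x^n qcheck (r+1) (frac x)]) / (r+1).
  Applying the linear operator P^n and the induction hypothesis for (n, r+1) produces the new factor
  P - 1/(n+1), and the constants match because (n+1) * C(r+n+1, n+1) = (r+1) * C(r+n+1, n).\<close>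

text \<open>Boundedness is what makes the class closed under P: for f merely integrable on [0, X],
  P f need not be integrable near 0.\<close>
definition locally_bounded_integrable :: "(real \<Rightarrow> real) \<Rightarrow> bool" where
  "locally_bounded_integrable f \<longleftrightarrow> (\<forall>X>0. f integrable_on {0..X} \<and> bounded (f ` {0..X}))"

lemma Pop_nonpos: "X \<le> 0 \<Longrightarrow> Pop f X = 0"
  by (cases "X = 0") (simp_all add: Pop_def)

lemma Pop_cmult: "Pop (\<lambda>x. c * f x) X = c * Pop f X"
  by (simp add: Pop_def)

lemma Pop_cong_pos:
  assumes "\<And>x. x > 0 \<Longrightarrow> f x = g x"
  shows "Pop f X = Pop g X"
proof -
  have "integral {0..X} f = integral {0..X} g"
    by (rule integral_spike[of "{0}"]) (use assms in auto)
  then show ?thesis by (simp add: Pop_def)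
qed

lemma funpow_Pop_cong_pos:
  assumes "\<And>x. x > 0 \<Longrightarrow> f x = g x" and "X > 0"
  shows "(Pop ^^ n) f X = (Pop ^^ n) g X"
  using assms(2)
proof (induction n arbitrary: X)
  case 0
  then show ?case by (simp add: assms(1))
next
  case (Suc n)
  show ?case
    unfolding funpow.simps o_apply by (rule Pop_cong_pos) (rule Suc.IH)
qed

lemma Pop_lincomb:
  assumes "locally_bounded_integrable f" and "locally_bounded_integrable g"
  shows "Pop (\<lambda>x. a * f x + b * g x) X = a * Pop f X + b * Pop g X"
proof (cases "X > 0")
  case True
  with assms have "f integrable_on {0..X}" and "g integrable_on {0..X}"
    by (auto simp: locally_bounded_integrable_def)
  then have "integral {0..X} (\<lambda>x. a * f x + b * g x) = a * integral {0..X} f + b * integral {0..X} g"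
    by (simp add: integral_add integrable_on_mult_right)
  then show ?thesis
    by (simp add: Pop_def add_divide_distrib)
qed (simp add: Pop_nonpos)

lemma abs_Pop_le:
  assumes f: "f integrable_on {0..X}" and B: "\<forall>x\<in>{0..X}. \<bar>f x\<bar> \<le> B" and x: "x \<in> {0..X}"
  shows "\<bar>Pop f x\<bar> \<le> B"
proof (cases "x = 0")
  case True
  then show ?thesis using B x abs_ge_zero[of "f 0"] by (force simp: Pop_def)
next
  case False
  with x have x: "0 < x" "x \<le> X" by auto
  have "f integrable_on {0..x}"
    by (rule integrable_on_subinterval[OF f]) (use x in auto)
  then have "norm (integral {0..x} f) \<le> integral {0..x} (\<lambda>_. B)"
    by (rule integral_norm_bound_integral) (use B x in auto)
  with x show ?thesis by (simp add: Pop_def abs_divide divide_le_eq mult.commute)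
qed

lemma locally_bounded_integrable_Pop:
  assumes "locally_bounded_integrable f"
  shows "locally_bounded_integrable (Pop f)"
  unfolding locally_bounded_integrable_def
proof (intro allI impI conjI)
  fix X :: real
  assume X: "X > 0"
  with assms have f: "f integrable_on {0..X}" and "bounded (f ` {0..X})"
    by (auto simp: locally_bounded_integrable_def)
  then obtain B where B: "\<forall>x\<in>{0..X}. \<bar>f x\<bar> \<le> B"
    by (auto simp: bounded_iff)
  then show "bounded (Pop f ` {0..X})"
    using abs_Pop_le[OF f B] by (auto simp: bounded_iff intro!: exI[of _ B])
  have "continuous_on {0..X} (\<lambda>x. integral {0..x} f)"
    by (rule indefinite_integral_continuous_1[OF f])
  then have "continuous_on {0<..<X} (\<lambda>x. integral {0..x} f)"
    by (rule continuous_on_subset) auto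
  then have "continuous_on {0<..<X} (\<lambda>x. integral {0..x} f / x)"
    by (intro continuous_intros) auto
  then have cont: "continuous_on {0<..<X} (Pop f)"
    by (simp add: Pop_def[abs_def])
  have "Pop f integrable_on {0<..<X}"
  proof (rule measurable_bounded_by_integrable_imp_integrable_real[where g="\<lambda>_. B"])
    show "Pop f \<in> borel_measurable (lebesgue_on {0<..<X})"
      by (rule continuous_imp_measurable_on_sets_lebesgue[OF cont]) auto
    show "(\<lambda>_. B) integrable_on {0<..<X}"
      unfolding integrable_on_open_interval_real by (intro integrable_continuous_interval continuous_on_const)
  qed (use abs_Pop_le[OF f B] in auto)
  then show "Pop f integrable_on {0..X}"
    using integrable_on_open_interval_real by blast
qed

lemma locally_bounded_integrable_funpow_Pop:
  "locally_bounded_integrable f \<Longrightarrow> locally_bounded_integrable ((Pop ^^ n) f)"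
  by (induction n) (auto intro: locally_bounded_integrable_Pop)

lemma funpow_Pop_lincomb:
  assumes "locally_bounded_integrable f" and "locally_bounded_integrable g"
  shows "(Pop ^^ n) (\<lambda>x. a * f x + b * g x) X = a * (Pop ^^ n) f X + b * (Pop ^^ n) g X"
proof (induction n arbitrary: X)
  case (Suc n)
  have "(Pop ^^ n) (\<lambda>x. a * f x + b * g x) = (\<lambda>x. a * (Pop ^^ n) f x + b * (Pop ^^ n) g x)"
    using Suc.IH by auto
  then show ?case
    by (simp add: Pop_lincomb locally_bounded_integrable_funpow_Pop assms)
qed simp

lemma continuous_on_imp_locally_bounded_integrable:
  assumes "continuous_on {0..} f"
  shows "locally_bounded_integrable f"
  unfolding locally_bounded_integrable_def
proof (intro allI impI conjI)
  fix X :: real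
  have "continuous_on {0..X} f"
    using assms by (rule continuous_on_subset) auto
  then show "f integrable_on {0..X}" and "bounded (f ` {0..X})"
    by (auto intro: integrable_continuous_interval compact_imp_bounded compact_continuous_image)
qed

lemma Pop_power_Suc_by_parts:
  fixes H D :: "real \<Rightarrow> real"
  assumes X: "X > 0" and S: "finite S" and H: "continuous_on {0..X} H"
    and D: "\<And>x. x \<in> {0<..<X} - S \<Longrightarrow> (H has_real_derivative D x) (at x)"
  shows "Pop (\<lambda>x. x ^ Suc n * D x) X = X ^ n * H X - real (Suc n) * Pop (\<lambda>x. x ^ n * H x) X"
proof -
  define g where "g = (\<lambda>x. real (Suc n) * (x ^ n * H x))"
  have "((\<lambda>x. g x + x ^ Suc n * D x) has_integral (X ^ Suc n * H X - 0 ^ Suc n * H 0)) {0..X}"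
  proof (rule fundamental_theorem_of_calculus_interior_strong[OF S])
    show "continuous_on {0..X} (\<lambda>x. x ^ Suc n * H x)"
      by (intro continuous_intros H)
    fix x
    assume "x \<in> {0<..<X} - S"
    have "((\<lambda>x. x ^ Suc n * H x) has_real_derivative g x + x ^ Suc n * D x) (at x)"
      using DERIV_mult[OF DERIV_pow[of "Suc n"] D[OF \<open>x \<in> {0<..<X} - S\<close>]]
      by (simp add: g_def algebra_simps)
    then show "((\<lambda>x. x ^ Suc n * H x) has_vector_derivative g x + x ^ Suc n * D x) (at x)"
      by (simp add: has_real_derivative_iff_has_vector_derivative)
  qed (use X in auto)
  moreover have "(g has_integral integral {0..X} g) {0..X}"
    unfolding g_def by (intro integrable_integral integrable_continuous_interval continuous_intros H)
  ultimately have "((\<lambda>x. x ^ Suc n * D x) has_integral X ^ Suc n * H X - integral {0..X} g) {0..X}"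
    by (auto dest: has_integral_diff)
  then have "integral {0..X} (\<lambda>x. x ^ Suc n * D x) = X ^ Suc n * H X - integral {0..X} g"
    by (rule integral_unique)
  moreover have "integral {0..X} g = real (Suc n) * integral {0..X} (\<lambda>x. x ^ n * H x)"
    by (simp add: g_def)
  ultimately show ?thesis
    using X by (simp add: Pop_def diff_divide_distrib)
qed

lemma continuous_on_qpoly: "continuous_on {0..1} (qpoly (Suc m))"
proof (induction m)
  case (Suc m)
  have "continuous_on {0..1} (\<lambda>a. integral {0..a} (qpoly (Suc m)))"
    by (rule indefinite_integral_continuous_1[OF integrable_continuous_interval[OF Suc.IH]])
  then show ?case by (simp add: continuous_intros)
qed (simp add: continuous_intros)

lemma has_real_derivative_qpoly:
  assumes "x \<in> {0..1}"
  shows "(qpoly (Suc (Suc m)) has_real_derivative qpoly (Suc m) x) (at x within {0..1})"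
  using integral_has_real_derivative[OF continuous_on_qpoly assms]
  by (auto intro!: derivative_eq_intros)

lemma integral_qpoly: "integral {0..1} (qpoly (Suc m)) = 0"
proof (cases m)
  case 0
  have "((\<lambda>a::real. a - 1/2) has_integral (1 - 0) / 2 - 1/2) {0..1}"
    using has_integral_diff[OF ident_has_integral has_integral_const_real, of 0 1 "1/2"] by simp
  with 0 show ?thesis by (simp add: integral_unique)
next
  case (Suc k)
  have "(\<lambda>a. integral {0..a} (qpoly (Suc k))) integrable_on {0..1}"
    by (intro integrable_continuous_interval indefinite_integral_continuous_1
        integrable_continuous_interval[OF continuous_on_qpoly])
  moreover have "(\<lambda>_. c) integrable_on {0..1::real}" for c :: real
    by (simp add: integrable_continuous_interval)
  ultimately show ?thesis
    using Suc by (simp add: integral_diff)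
qed

lemma continuous_on_qcheck: "continuous_on {0..1} (qcheck r)"
  unfolding qcheck_def[abs_def] by (intro continuous_intros continuous_on_qpoly)

lemma has_real_derivative_qcheck_Suc:
  assumes "x \<in> {0..1}"
  shows "(qcheck (Suc r) has_real_derivative real (Suc r) * qcheck r x) (at x within {0..1})"
  unfolding qcheck_def[abs_def]
  using DERIV_cmult[OF has_real_derivative_qpoly[OF assms], of "fact (Suc r)" r]
  by (simp add: algebra_simps)

lemma qcheck_Suc_0_eq_1: "qcheck (Suc r) 0 = qcheck (Suc r) 1"
  using integral_qpoly[of r] by (simp add: qcheck_def)

lemma frac_comp_eq_shift:
  fixes x :: real
  assumes "x \<in> {of_int k..of_int k + 1}" and "g 0 = g 1"
  shows "g (frac x) = g (x - of_int k)"
proof (cases "x = of_int k + 1")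
  case False
  with assms(1) have "floor x = k" by (simp add: floor_unique)
  then show ?thesis by (simp add: frac_def)
qed (simp add: assms(2))

lemma continuous_on_frac_comp:
  fixes g :: "real \<Rightarrow> 'a::topological_space"
  assumes g: "continuous_on {0..1} g" and per: "g 0 = g 1"
  shows "continuous_on UNIV (\<lambda>x. g (frac x))"
proof -
  have piece: "continuous_on {of_int k..of_int k + 1} (\<lambda>x. g (frac x))" for k :: int
  proof -
    have "continuous_on {of_int k..of_int k + 1} (\<lambda>x::real. x - of_int k)"
      by (intro continuous_intros)
    then have "continuous_on {of_int k..of_int k + 1} (\<lambda>x. g (x - of_int k))"
      by (rule continuous_on_compose2[OF g]) auto
    then show ?thesis
      by (rule continuous_on_eq) (use frac_comp_eq_shift[OF _ per] in auto)
  qed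
  show ?thesis
  proof (rule continuous_at_imp_continuous_on, intro ballI)
    fix x :: real
    define k where "k = floor x"
    have "continuous_on ({of_int (k - 1)..of_int (k - 1) + 1} \<union> {of_int k..of_int k + 1}) (\<lambda>x. g (frac x))"
      by (intro continuous_on_closed_Un piece) auto
    moreover have "{of_int (k - 1)..of_int (k - 1) + 1} \<union> {of_int k..of_int k + 1} = {of_int k - 1..of_int k + (1::real)}"
      by auto
    moreover have "x \<in> interior {of_int k - 1..of_int k + (1::real)}"
      unfolding k_def by simp linarith
    ultimately show "isCont (\<lambda>x. g (frac x)) x"
      using continuous_on_interior by fastforce
  qed
qed

lemma has_real_derivative_frac_comp:
  fixes x :: real
  assumes d: "(g has_real_derivative D) (at (frac x) within {0..1})" and x: "x \<notin> \<int>"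
  shows "((\<lambda>y. g (frac y)) has_real_derivative D) (at x)"
proof -
  define k where "k = floor x"
  have "x \<noteq> of_int k"
    using x by auto
  moreover have "of_int k \<le> x" "x < of_int k + 1"
    unfolding k_def by linarith+
  ultimately have kx: "of_int k < x" "x < of_int k + 1"
    by auto
  have "frac x \<in> {0<..<1}"
    using x by (auto simp: frac_lt_1 frac_ge_0 frac_eq_0_iff order_le_less)
  then have "(g has_real_derivative D) (at (x - of_int k))"
    using d at_within_Icc_at[of 0 "frac x" 1] by (simp add: frac_def k_def)
  then have "((\<lambda>y. g (y - of_int k)) has_real_derivative D) (at x)"
    using DERIV_shift[of g D x "- of_int k"] by simp
  then show ?thesis
  proof (rule has_field_derivative_transform_within_open[where S="{of_int k<..<of_int k + 1}"])
    fix y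
    assume "y \<in> {real_of_int k<..<real_of_int k + 1}"
    then have "floor y = k" by (simp add: floor_unique)
    then show "g (y - of_int k) = g (frac y)" by (simp add: frac_def)
  qed (use kx in auto)
qed

lemma continuous_on_qcheck_Suc_frac: "continuous_on UNIV (\<lambda>x. qcheck (Suc r) (frac x))"
  by (rule continuous_on_frac_comp[OF continuous_on_qcheck qcheck_Suc_0_eq_1])

lemma Pop_power_Suc_qcheck:
  assumes X: "X > 0"
  shows "Pop (\<lambda>x. x ^ Suc n * qcheck r (frac x)) X
    = (X ^ n * qcheck (Suc r) (frac X) - real (Suc n) * Pop (\<lambda>x. x ^ n * qcheck (Suc r) (frac x)) X)
      / real (Suc r)"
proof -
  have "Pop (\<lambda>x. x ^ Suc n * (real (Suc r) * qcheck r (frac x))) X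
      = X ^ n * qcheck (Suc r) (frac X) - real (Suc n) * Pop (\<lambda>x. x ^ n * qcheck (Suc r) (frac x)) X"
  proof (rule Pop_power_Suc_by_parts[OF X finite_int_segment[of 0 X]])
    show "continuous_on {0..X} (\<lambda>x. qcheck (Suc r) (frac x))"
      by (rule continuous_on_subset[OF continuous_on_qcheck_Suc_frac]) auto
    fix x
    assume "x \<in> {0<..<X} - {x \<in> \<int>. 0 \<le> x \<and> x \<le> X}"
    then have "x \<notin> \<int>" by auto
    then show "((\<lambda>x. qcheck (Suc r) (frac x)) has_real_derivative real (Suc r) * qcheck r (frac x)) (at x)"
      by (intro has_real_derivative_frac_comp has_real_derivative_qcheck_Suc)
        (auto simp: frac_ge_0 less_imp_le[OF frac_lt_1])
  qed
  then show ?thesis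
    using Pop_cmult[of "real (Suc r)" "\<lambda>x. x ^ Suc n * qcheck r (frac x)" X]
    by (simp add: field_simps)
qed

lemma Suc_times_binomial_add_real:
  "real (Suc n) * real ((r + Suc n) choose Suc n) = real (Suc r) * real ((Suc r + n) choose n)"
  using Suc_times_binomial_add[of n r] by (metis add_Suc add_Suc_right add.commute of_nat_mult)

lemma funpow_Pop_power_Suc_qcheck:
  fixes n r :: nat and X :: real
  defines "f \<equiv> \<lambda>x. x ^ n * qcheck (Suc r) (frac x)"
  assumes X: "X > 0"
  shows "(Pop ^^ Suc n) (\<lambda>x. x ^ Suc n * qcheck r (frac x)) X
    = ((Pop ^^ n) f X - real (Suc n) * Pop ((Pop ^^ n) f) X) / real (Suc r)"
proof -
  have f: "locally_bounded_integrable f"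
    unfolding f_def
    by (intro continuous_on_imp_locally_bounded_integrable continuous_intros
        continuous_on_subset[OF continuous_on_qcheck_Suc_frac]) auto
  have "(Pop ^^ Suc n) (\<lambda>x. x ^ Suc n * qcheck r (frac x)) X
      = (Pop ^^ n) (\<lambda>y. 1 / real (Suc r) * f y + (- real (Suc n) / real (Suc r)) * Pop f y) X"
    unfolding funpow_Suc_right o_apply
  proof (rule funpow_Pop_cong_pos[OF _ X])
    fix y :: real
    assume "y > 0"
    then have "Pop (\<lambda>x. x ^ Suc n * qcheck r (frac x)) y
        = (f y - real (Suc n) * Pop f y) / real (Suc r)"
      unfolding f_def by (rule Pop_power_Suc_qcheck)
    then show "Pop (\<lambda>x. x ^ Suc n * qcheck r (frac x)) y
        = 1 / real (Suc r) * f y + (- real (Suc n) / real (Suc r)) * Pop f y"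
      by argo
  qed
  also have "\<dots> = 1 / real (Suc r) * (Pop ^^ n) f X
      + (- real (Suc n) / real (Suc r)) * Pop ((Pop ^^ n) f) X"
    by (subst funpow_Pop_lincomb[OF f locally_bounded_integrable_Pop[OF f]]) (simp only: funpow_swap1)
  finally show ?thesis
    by argo
qed

lemma funpow_Pop_power_qcheck:
  assumes "X > 0"
  shows "(Pop ^^ n) (\<lambda>x. x ^ n * qcheck r (frac x)) X
    = (-1) ^ n / real ((r + n) choose n) * Pfactors n (\<lambda>x. qcheck (r + n) (frac x)) X"
  using assms
proof (induction n arbitrary: r X)
  case (Suc n)
  define f where "f = (\<lambda>x::real. x ^ n * qcheck (Suc r) (frac x))"
  define G where "G = Pfactors n (\<lambda>x. qcheck (Suc r + n) (frac x))"
  define c where "c = real ((Suc r + n) choose n)"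
  define c' where "c' = real ((r + Suc n) choose Suc n)"
  have IH: "(Pop ^^ n) f y = (-1) ^ n / c * G y" if "y > 0" for y
    using Suc.IH[OF that, of "Suc r"] by (simp add: f_def G_def c_def)
  have "(Pop ^^ Suc n) (\<lambda>x. x ^ Suc n * qcheck r (frac x)) X
      = ((Pop ^^ n) f X - real (Suc n) * Pop ((Pop ^^ n) f) X) / real (Suc r)"
    unfolding f_def by (rule funpow_Pop_power_Suc_qcheck[OF Suc.prems])
  also have "Pop ((Pop ^^ n) f) X = Pop (\<lambda>y. (-1) ^ n / c * G y) X"
    by (rule Pop_cong_pos) (rule IH)
  also have "\<dots> = (-1) ^ n / c * Pop G X"
    by (rule Pop_cmult)
  also have "(Pop ^^ n) f X = (-1) ^ n / c * G X"
    using IH Suc.prems .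
  also have "((-1) ^ n / c * G X - real (Suc n) * ((-1) ^ n / c * Pop G X)) / real (Suc r)
      = (-1) ^ Suc n / c' * (Pop G X - G X / real (Suc n))"
  proof -
    have "(k / c * g - m * (k / c * p)) / s = (-1 * k) / c' * (p - g / m)"
      if "m * c' = s * c" "m \<noteq> 0" "s \<noteq> 0" "c \<noteq> 0" for m s c c' k g p :: real
    proof -
      from that have "c' \<noteq> 0" by auto
      with that show ?thesis by (simp add: field_simps)
    qed
    from this[OF Suc_times_binomial_add_real[of n r, folded c_def c'_def]] show ?thesis
      unfolding power_Suc by (simp add: c_def)
  qed
  also have "\<dots> = (-1) ^ Suc n / real ((r + Suc n) choose Suc n)
      * Pfactors (Suc n) (\<lambda>x. qcheck (r + Suc n) (frac x)) X"
    by (simp add: G_def c'_def)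
  finally show ?case .
qed simp

theorem mainTheorem6:
  fixes n r :: nat and X :: real
  assumes "n \<ge> 1" and "X > 0"
  shows "(Pop ^^ n) (\<lambda>x. x ^ n * qcheck r (frac x)) X
    = (-1) ^ n / real ((r + n) choose n) * Pfactors n (\<lambda>x. qcheck (r + n) (frac x)) X"
  using funpow_Pop_power_qcheck[OF assms(2)] .

end
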